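(* Fix $\alpha>0$ and positive integers $n$ and $h$. If $\pi\in S_n$ is chosen uniformly at random, then $$\Pr\big[\mathrm{Int}(\pi,\pi+h)\ge n^{2/3+\alpha}\big]\le\big(e^5 n^{-3\alpha/2}\big)^{n^{2/3+\alpha}}.$$
   Context: For a sequence $\sigma=(\sigma(1),\dots,\sigma(n))$ of distinct integers, an exact pattern of $\sigma$ is a sequence $\rho=(\rho(1),\dots,\rho(k))$ such that there are indices $1\le i_1<\dots<i_k\le n$ with $\sigma(i_j)=\rho(j)$ for all $j$. For $\pi\in S_n$ (in one-line notation) and an integer $h$, $\pi+h$ denotes the sequence $(\pi(1)+h,\dots,\pi(n)+h)$. The ordered intersection $\mathrm{Int}(\sigma,\tau)$ of two such sequences is the largest $k$ such that $\sigma$ and $\tau$ share a common exact pattern of length $k$. *)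

theory Defs
  imports Complex_Main "HOL-Library.Sublist" "HOL-Combinatorics.Multiset_Permutations"
begin

text \<open>A permutation of [n] in one-line notation is a list of integers with distinct
entries whose set of entries is {1..n}.  An exact pattern of a sequence is a
(not necessarily contiguous) subsequence, i.e. the library notion subseq.\<close>

definition shift_seq :: "int list \<Rightarrow> int \<Rightarrow> int list" where
  "shift_seq \<pi> h = map (\<lambda>x. x + h) \<pi>"

definition ord_int :: "int list \<Rightarrow> int list \<Rightarrow> nat" where
  "ord_int \<sigma> \<tau> = Max {length \<rho> | \<rho>. subseq \<rho> \<sigma> \<and> subseq \<rho> \<tau>}"

end

theory Submission
  imports Defs
begin

text \<open>If Int(\<pi>, \<pi> + h) \<ge> m, then \<pi> and \<pi> + h share an exact pattern of length
k = \<lceil>m\<rceil>: there are k-sets I, J of positions such that \<pi> read along I equals \<pi> read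
along J plus h. For fixed I and J a permutation is determined by its entries outside I,
since each entry at a position of I is h plus another entry of \<pi> and the entries are
bounded below. Hence at most n!/k! permutations realise a given pair (I, J), and the
probability is at most C(n,k)^2/k! \<le> (e^3 n^2/k^3)^k \<le> (e^3 n^(-3\<alpha>))^k. This is below the
claimed bound when its base e^5 n^(-3\<alpha>/2) is less than 1; otherwise the bound is at
least 1.\<close>

lemma nths_eq_map_nth: "nths xs I = map (nth xs) (filter (\<lambda>i. i \<in> I) [0..<length xs])"
proof (induction xs rule: rev_induct)
  case (snoc x xs)
  have "map (nth (xs @ [x])) (filter (\<lambda>i. i \<in> I) [0..<length xs])
      = map (nth xs) (filter (\<lambda>i. i \<in> I) [0..<length xs])"
    by (intro map_cong) (auto simp: nth_append)
  then show ?case using snoc by (simp add: nths_append)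
qed simp

lemma subseq_obtains_nths:
  assumes "subseq xs ys"
  obtains I where "I \<subseteq> {..<length ys}" "card I = length xs" "xs = nths ys I"
proof -
  obtain N where N: "xs = nths ys N" using assms subseq_conv_nths by blast
  let ?I = "N \<inter> {..<length ys}"
  have "nths ys ?I = nths ys N"
    unfolding nths_eq_map_nth by (intro arg_cong[where f = "map _"] filter_cong) auto
  moreover have "card ?I = length xs"
    using N length_nths[of ys N] by (simp add: Int_def conj_commute)
  ultimately show thesis using N that[of ?I] by auto
qed

lemma common_subseq_if_le_ord_int:
  assumes "k \<le> ord_int \<sigma> \<tau>"
  shows "\<exists>\<rho>. subseq \<rho> \<sigma> \<and> subseq \<rho> \<tau> \<and> length \<rho> = k"
proof -
  let ?L = "{length \<rho> | \<rho>. subseq \<rho> \<sigma> \<and> subseq \<rho> \<tau>}"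
  have "?L \<subseteq> {..length \<sigma>}" by (auto dest: list_emb_length)
  then have "finite ?L" by (rule finite_subset) simp
  moreover have "length [] \<in> ?L" by (intro CollectI exI[of _ "[]"]) simp
  ultimately have "ord_int \<sigma> \<tau> \<in> ?L" unfolding ord_int_def by (intro Max_in) auto
  then obtain \<rho> where \<rho>: "subseq \<rho> \<sigma>" "subseq \<rho> \<tau>" "length \<rho> = ord_int \<sigma> \<tau>"
    by (elim CollectE exE) auto
  have "subseq (take k \<rho>) \<rho>" by (rule prefix_imp_subseq[OF take_is_prefix])
  then have "subseq (take k \<rho>) \<sigma>" "subseq (take k \<rho>) \<tau>"
    using subseq_order.trans \<rho>(1,2) by metis+
  then show ?thesis using \<rho>(3) assms by (intro exI[of _ "take k \<rho>"]) simp
qed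

lemma map_eq_map_obtain_common_index:
  assumes "map f xs = map g ys" "map f' xs = map g' ys" "x \<in> set xs"
  obtains y where "y \<in> set ys" "f x = g y" "f' x = g' y"
proof -
  obtain t where t: "t < length xs" "xs ! t = x" using assms(3) by (auto simp: in_set_conv_nth)
  have "length xs = length ys" using map_eq_imp_length_eq[OF assms(1)] .
  then show thesis
    using that[of "ys ! t"] t assms(1,2) by (metis nth_map nth_mem)
qed

lemma eq_by_shift_recursion:
  fixes p q :: "'a \<Rightarrow> int" and h b :: int
  assumes "h > 0" and "\<And>x. x \<in> X \<Longrightarrow> b \<le> p x"
    and "\<And>x. x \<in> X - D \<Longrightarrow> p x = q x"
    and "\<And>x. x \<in> D \<Longrightarrow> \<exists>y\<in>X. p x = p y + h \<and> q x = q y + h"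
    and "x \<in> X"
  shows "p x = q x"
  using assms(5)
proof (induction "nat (p x - b)" arbitrary: x rule: less_induct)
  case less
  show ?case
  proof (cases "x \<in> D")
    case True
    then obtain y where y: "y \<in> X" "p x = p y + h" "q x = q y + h" using assms(4) by blast
    have "nat (p y - b) < nat (p x - b)" using y assms(1) assms(2)[OF \<open>y \<in> X\<close>] by simp
    then show ?thesis using less.hyps y by simp
  qed (use assms(3) less.prems in blast)
qed

lemma card_permutations_nths_shift_le:
  fixes A :: "int set" and h :: int
  assumes "finite A" and "h > 0" and "I \<subseteq> {..<card A}"
  shows "card {\<pi> \<in> permutations_of_set A. nths \<pi> I = nths (shift_seq \<pi> h) J} * fact (card I)
           \<le> fact (card A)"
proof -
  let ?n = "card A"
  let ?B = "{\<pi> \<in> permutations_of_set A. nths \<pi> I = nths (shift_seq \<pi> h) J}"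
  let ?D = "{xs. length xs = ?n - card I \<and> distinct xs \<and> set xs \<subseteq> A}"
  let ?pos = "\<lambda>K. filter (\<lambda>i. i \<in> K) [0..<?n]"
  have card_I: "card I \<le> ?n" using card_mono[OF finite_lessThan assms(3)] by simp
  have inj: "inj_on (\<lambda>\<pi>. nths \<pi> (- I)) ?B"
  proof (rule inj_onI)
    fix p q assume p: "p \<in> ?B" and q: "q \<in> ?B" and outside: "nths p (- I) = nths q (- I)"
    have len: "length p = ?n" "length q = ?n"
      using p q by (auto simp: length_finite_permutations_of_set)
    have p_rec: "map (nth p) (?pos I) = map (\<lambda>i. p ! i + h) (?pos J)"
      using p len by (simp add: shift_seq_def nths_map nths_eq_map_nth)
    have q_rec: "map (nth q) (?pos I) = map (\<lambda>i. q ! i + h) (?pos J)"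
      using q len by (simp add: shift_seq_def nths_map nths_eq_map_nth)
    have "p ! x = q ! x" if "x \<in> {..<?n}" for x
    proof (rule eq_by_shift_recursion[where p = "nth p" and X = "{..<?n}" and D = I])
      show "Min A \<le> p ! y" if "y \<in> {..<?n}" for y
        using that len p by (auto intro!: Min_le assms(1) dest: permutations_of_setD(1))
      show "p ! y = q ! y" if "y \<in> {..<?n} - I" for y
        using outside that len map_eq_conv[of "nth p" "?pos (- I)" "nth q"]
        by (auto simp: nths_eq_map_nth)
      show "\<exists>z\<in>{..<?n}. p ! y = p ! z + h \<and> q ! y = q ! z + h" if "y \<in> I" for y
      proof -
        have "y \<in> set (?pos I)" using that assms(3) by auto
        then obtain z where "z \<in> set (?pos J)" "p ! y = p ! z + h" "q ! y = q ! z + h"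
          by (rule map_eq_map_obtain_common_index[OF p_rec q_rec])
        then show ?thesis by auto
      qed
    qed (use assms(2) that in auto)
    then show "p = q" using len by (auto intro: nth_equalityI)
  qed
  have "nths \<pi> (- I) \<in> ?D" if "\<pi> \<in> permutations_of_set A" for \<pi>
  proof -
    from that have len: "length \<pi> = ?n" and "distinct \<pi>" "set \<pi> = A"
      by (auto simp: length_finite_permutations_of_set dest: permutations_of_setD)
    have "{i. i < ?n \<and> i \<in> - I} = {..<?n} - I" by auto
    then have "length (nths \<pi> (- I)) = ?n - card I"
      using assms(3) len by (simp add: length_nths card_Diff_subset finite_subset)
    then show ?thesis
      using \<open>distinct \<pi>\<close> \<open>set \<pi> = A\<close> set_nths_subset[of \<pi>] by auto
  qed
  then have "(\<lambda>\<pi>. nths \<pi> (- I)) ` ?B \<subseteq> ?D" by blast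
  then have "card ?B \<le> card ?D"
  proof (rule card_inj_on_le[OF inj])
    show "finite ?D"
      by (rule finite_subset[OF _ finite_lists_length_eq[OF assms(1)]]) auto
  qed
  also have "card ?D = \<Prod>{Suc (card I)..?n}"
    using card_I by (simp add: card_lists_distinct_length_eq assms(1))
  finally show ?thesis
    using fact_eq_fact_times[OF card_I] by (simp add: mult.commute)
qed

lemma card_permutations_common_shift_subseq_le:
  fixes A :: "int set" and h :: int
  assumes "finite A" and "h > 0"
  shows "card {\<pi> \<in> permutations_of_set A.
            \<exists>\<rho>. subseq \<rho> \<pi> \<and> subseq \<rho> (shift_seq \<pi> h) \<and> length \<rho> = k} * fact k
           \<le> (card A choose k)^2 * fact (card A)"
proof -
  let ?n = "card A"
  let ?C = "{\<pi> \<in> permutations_of_set A.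
              \<exists>\<rho>. subseq \<rho> \<pi> \<and> subseq \<rho> (shift_seq \<pi> h) \<and> length \<rho> = k}"
  let ?S = "{I. I \<subseteq> {..<?n} \<and> card I = k}"
  let ?B = "\<lambda>(I, J). {\<pi> \<in> permutations_of_set A. nths \<pi> I = nths (shift_seq \<pi> h) J}"
  have "?C \<subseteq> (\<Union>w\<in>?S \<times> ?S. ?B w)"
  proof
    fix \<pi> assume "\<pi> \<in> ?C"
    then obtain \<rho> where \<pi>: "\<pi> \<in> permutations_of_set A"
      and \<rho>: "subseq \<rho> \<pi>" "subseq \<rho> (shift_seq \<pi> h)" "length \<rho> = k"
      by blast
    have len: "length \<pi> = ?n" "length (shift_seq \<pi> h) = ?n"
      using \<pi> by (simp_all add: shift_seq_def length_finite_permutations_of_set)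
    obtain I where I: "I \<subseteq> {..<?n}" "card I = k" "\<rho> = nths \<pi> I"
      using subseq_obtains_nths[OF \<rho>(1)] \<rho>(3) len(1) by metis
    obtain J where J: "J \<subseteq> {..<?n}" "card J = k" "\<rho> = nths (shift_seq \<pi> h) J"
      using subseq_obtains_nths[OF \<rho>(2)] \<rho>(3) len(2) by metis
    have "(I, J) \<in> ?S \<times> ?S" "\<pi> \<in> ?B (I, J)" using I J \<pi> by auto
    then show "\<pi> \<in> (\<Union>w\<in>?S \<times> ?S. ?B w)" by blast
  qed
  then have "card ?C \<le> card (\<Union>w\<in>?S \<times> ?S. ?B w)"
    by (rule card_mono[rotated]) (simp add: case_prod_beta)
  also have "\<dots> \<le> (\<Sum>w\<in>?S \<times> ?S. card (?B w))"
    by (rule card_UN_le) simp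
  finally have "card ?C * fact k \<le> (\<Sum>w\<in>?S \<times> ?S. card (?B w) * fact k)"
    by (simp add: sum_distrib_right[symmetric])
  also have "\<dots> \<le> (\<Sum>w\<in>?S \<times> ?S. fact ?n)"
  proof (rule sum_mono)
    fix w assume "w \<in> ?S \<times> ?S"
    then obtain I J where "w = (I, J)" "I \<subseteq> {..<?n}" "card I = k" by blast
    then show "card (?B w) * fact k \<le> fact ?n"
      using card_permutations_nths_shift_le[OF assms, of I J] by simp
  qed
  also have "\<dots> = (?n choose k)^2 * fact ?n"
    using n_subsets[of "{..<?n}" k] by (simp add: card_cartesian_product power2_eq_square)
  finally show ?thesis .
qed

lemma power_div_fact_le_exp:
  fixes x :: real
  assumes "x \<ge> 0"
  shows "x ^ k / fact k \<le> exp x"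
proof -
  have "x ^ k / fact k \<le> (\<Sum>i\<le>k. x ^ i / fact i)"
    by (rule member_le_sum) (use assms in auto)
  also have "\<dots> \<le> exp x"
    using assms summable_exp_generic[of x]
    by (auto simp: exp_def divide_inverse ac_simps intro!: sum_le_suminf)
  finally show ?thesis .
qed

lemma binomial_sq_div_fact_le:
  "real (n choose k)^2 / fact k \<le> (exp 3 * real n ^ 2 / real k ^ 3) ^ k"
proof (cases "k = 0")
  case False
  have "exp 1 ^ k = exp (real k)" using exp_of_nat_mult[of k "1::real"] by simp
  then have fact_lower: "(real k / exp 1) ^ k \<le> fact k"
    using power_div_fact_le_exp[of "real k" k] by (simp add: power_divide field_simps)
  have "real ((n choose k) * fact k) \<le> real (n ^ k)"
    using binomial_fact_pow[of n k] by (simp only: of_nat_le_iff)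
  then have "real (n choose k) \<le> real n ^ k / fact k"
    by (simp add: field_simps)
  then have "real (n choose k)^2 / fact k \<le> (real n ^ k / fact k)^2 / fact k"
    by (intro divide_right_mono power_mono) auto
  also have "\<dots> = (real n ^ 2) ^ k / fact k ^ 3"
    by (simp add: power2_eq_square power3_eq_cube power_mult_distrib)
  also have "\<dots> \<le> (real n ^ 2) ^ k / ((real k / exp 1) ^ k) ^ 3"
    using False fact_lower by (intro divide_left_mono power_mono) auto
  also have "\<dots> = (exp 3 * real n ^ 2 / real k ^ 3) ^ k"
    using exp_of_nat_mult[of 3 "1::real"]
    by (simp add: power_divide power_mult_distrib power_mult[symmetric] mult.commute)
  finally show ?thesis .
qed simp

lemma exp_3_mult_sq_div_cube_le:
  fixes \<alpha> x :: real
  assumes "n > 0" and "real n powr (2/3 + \<alpha>) \<le> x"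
    and "exp 5 * real n powr (- 3 * \<alpha> / 2) \<le> 1"
  shows "exp 3 * real n ^ 2 / x ^ 3 \<le> exp 5 * real n powr (- 3 * \<alpha> / 2)"
proof -
  let ?c = "exp 5 * real n powr (- 3 * \<alpha> / 2)"
  have "real n powr (2 + 3 * \<alpha>) = (real n powr (2/3 + \<alpha>)) ^ 3"
    using assms(1) by (simp add: powr_powr powr_realpow[symmetric] algebra_simps)
  also have "\<dots> \<le> x ^ 3"
    using assms(2) by (intro power_mono) auto
  finally have x3: "real n powr (2 + 3 * \<alpha>) \<le> x ^ 3" .
  have "exp 3 * real n ^ 2 / x ^ 3 \<le> exp 3 * real n ^ 2 / real n powr (2 + 3 * \<alpha>)"
  proof (rule divide_left_mono)
    have "real n powr (2 + 3 * \<alpha>) > 0" using assms(1) by simp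
    moreover have "x ^ 3 > 0" using calculation x3 by linarith
    ultimately show "0 < x ^ 3 * real n powr (2 + 3 * \<alpha>)" by simp
  qed (use x3 in auto)
  also have "\<dots> = exp 3 * real n powr (- 3 * \<alpha>)"
    using assms(1) by (simp add: powr_add powr_minus_divide)
  also have "\<dots> = ?c ^ 2 / exp 7"
  proof -
    have "(real n powr (- 3 * \<alpha> / 2)) ^ 2 = real n powr (- 3 * \<alpha>)"
      using assms(1) by (simp add: powr_realpow[symmetric] powr_powr)
    moreover have "exp 5 ^ 2 = exp 7 * (exp 3 :: real)"
      by (simp add: power2_eq_square exp_add[symmetric])
    ultimately show ?thesis by (simp add: power_mult_distrib)
  qed
  also have "\<dots> \<le> ?c ^ 2"
    by (simp add: divide_le_eq mult_le_cancel_left1)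
  also have "\<dots> \<le> ?c"
    using assms(3) by (simp add: power2_eq_square mult_left_le)
  finally show ?thesis .
qed

lemma card_ord_int_shift_ge_div_le:
  fixes A :: "int set" and h :: int
  assumes "finite A" and "h > 0"
  shows "real (card {\<pi> \<in> permutations_of_set A. k \<le> ord_int \<pi> (shift_seq \<pi> h)})
           / real (card (permutations_of_set A))
         \<le> real (card A choose k)^2 / fact k"
proof -
  let ?S = "{\<pi> \<in> permutations_of_set A. k \<le> ord_int \<pi> (shift_seq \<pi> h)}"
  let ?C = "{\<pi> \<in> permutations_of_set A.
              \<exists>\<rho>. subseq \<rho> \<pi> \<and> subseq \<rho> (shift_seq \<pi> h) \<and> length \<rho> = k}"
  have "?S \<subseteq> ?C" using common_subseq_if_le_ord_int by blast
  then have "card ?S \<le> card ?C" by (intro card_mono) auto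
  then have "card ?S * fact k \<le> (card A choose k)^2 * fact (card A)"
    using card_permutations_common_shift_subseq_le[OF assms, of k] by (meson le_trans mult_le_mono1)
  then have "real (card ?S * fact k) \<le> real ((card A choose k)^2 * fact (card A))"
    by (simp only: of_nat_le_iff)
  then show ?thesis using assms(1) by (simp add: field_simps)
qed

lemma binomial_sq_div_fact_le_powr:
  fixes \<alpha> :: real
  assumes "n > 0" and "real n powr (2/3 + \<alpha>) \<le> real k"
    and "exp 5 * real n powr (- 3 * \<alpha> / 2) < 1"
  shows "real (n choose k)^2 / fact k
           \<le> (exp 5 * real n powr (- 3 * \<alpha> / 2)) powr (real n powr (2/3 + \<alpha>))"
proof -
  let ?c = "exp 5 * real n powr (- 3 * \<alpha> / 2)"
  have "real (n choose k)^2 / fact k \<le> (exp 3 * real n ^ 2 / real k ^ 3) ^ k"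
    by (rule binomial_sq_div_fact_le)
  also have "\<dots> \<le> ?c ^ k"
    using assms by (intro power_mono exp_3_mult_sq_div_cube_le) auto
  also have "\<dots> = ?c powr real k"
    using assms(1) by (simp add: powr_realpow)
  also have "\<dots> \<le> ?c powr (real n powr (2/3 + \<alpha>))"
    using assms(2,3) by (intro powr_mono') auto
  finally show ?thesis .
qed

theorem lemma3p6:
  fixes \<alpha> :: real and n h :: nat
  assumes "\<alpha> > 0" and "n > 0" and "h > 0"
  shows "real (card {\<pi> \<in> permutations_of_set {1..int n}.
                real (ord_int \<pi> (shift_seq \<pi> (int h))) \<ge> real n powr (2/3 + \<alpha>)})
           / real (card (permutations_of_set {1..int n}))
         \<le> (exp 5 * real n powr (- 3 * \<alpha> / 2)) powr (real n powr (2/3 + \<alpha>))"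
    (is "real (card ?S) / real (card ?P) \<le> ?c powr ?m")
proof -
  define k where "k = nat \<lceil>?m\<rceil>"
  have prob: "real (card ?S) / real (card ?P) \<le> real (n choose k)^2 / fact k"
    using card_ord_int_shift_ge_div_le[of "{1..int n}" "int h" k] assms(3)
    by (simp add: k_def nat_le_iff ceiling_le_iff)
  show ?thesis
  proof (cases "?c < 1")
    case True
    then have "real (n choose k)^2 / fact k \<le> ?c powr ?m"
      using assms(2) by (intro binomial_sq_div_fact_le_powr) (simp_all add: k_def real_nat_ceiling_ge)
    with prob show ?thesis by linarith
  next
    case False
    have "real (card ?S) \<le> real (card ?P)"
      using card_mono[OF finite_permutations_of_set Collect_subset] by (simp only: of_nat_le_iff)
    then have "real (card ?S) / real (card ?P) \<le> 1"
      by (simp add: divide_le_eq_1)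
    also have "1 \<le> ?c powr ?m"
      using False by (intro ge_one_powr_ge_zero) auto
    finally show ?thesis .
  qed
qed

end
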